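(* Given a finite hypergraph $H=(X,E)$, one can construct a set of points $P=\{p_e : e\in E\}$ in the plane (in convex position) and a family of convex polygons $\mathcal{R}=\{R_v: v\in X\}$ (possibly degenerate, each the convex hull of a subset of $P$) such that for every $e\in E$ and $v\in X$, $p_e\in R_v$ if and only if $v\in e$. Consequently, for every set $X'\subseteq X$ of $k$ vertices, the number of hyperedges $e\subseteq X'$ equals the number of points of $P$ exposed after deleting $\{R_v:v\in X'\}$ from $\mathcal{R}$, so a densest $k$-subhypergraph of $H$ corresponds to an optimal solution of max-exposure on $(P,\mathcal{R},k)$.
   Context: A point $p\in P$ is exposed with respect to a family of ranges $\mathcal{R}'$ if it lies in no range of $\mathcal{R}'$. Max-exposure: given $P$, $\mathcal{R}$ and $k$, delete $k$ ranges from $\mathcal{R}$ so as to maximize the number of exposed points. Densest $k$-subhypergraph: given a hypergraph $H=(X,E)$, find $k$ vertices maximizing the number of hyperedges entirely contained in them. *)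

theory Defs
  imports "HOL-Analysis.Analysis"
begin

definition exposed :: "'p set \<Rightarrow> 'p set set \<Rightarrow> 'p set" where
  "exposed P Rs = {q \<in> P. \<forall>r\<in>Rs. q \<notin> r}"

definition induced_edges :: "'a set set \<Rightarrow> 'a set \<Rightarrow> nat" where
  "induced_edges E Y = card {e \<in> E. e \<subseteq> Y}"

definition convex_position :: "(real^2) set \<Rightarrow> bool" where
  "convex_position P \<longleftrightarrow> (\<forall>q\<in>P. q \<notin> convex hull (P - {q}))"

end

theory Submission
  imports Defs
begin

text \<open>Put the hyperedges at distinct points of the parabola \<open>y = x\<^sup>2\<close>; these are in convex
  position, since every other point of the parabola lies strictly above the tangent at a given
  one. Let \<open>R\<^sub>v\<close> be the convex hull of the points of the hyperedges containing \<open>v\<close>. In convex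
  position the hull of a subset meets the point set exactly in that subset, so \<open>p\<^sub>e \<in> R\<^sub>v\<close> iff
  \<open>v \<in> e\<close>. Hence \<open>p\<^sub>e\<close> is exposed once \<open>{R\<^sub>v : v \<in> X'}\<close> is deleted iff no vertex outside
  \<open>X'\<close> lies in \<open>e\<close>, i.e. iff \<open>e \<subseteq> X'\<close>, and both objectives coincide for every \<open>X'\<close>.\<close>

definition parabola_point :: "real \<Rightarrow> real^2" where
  "parabola_point t = vector [t, t\<^sup>2]"

lemma inj_parabola_point: "inj parabola_point"
  by (rule injI) (metis parabola_point_def vector_2(1))

lemma inner_parabola_point:
  "inner (vector [a, b]) (parabola_point t) = a * t + b * t\<^sup>2"
  by (simp add: parabola_point_def inner_vec_def sum_2)

lemma parabola_point_above_tangent: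
  assumes "s \<noteq> t"
  shows "inner (vector [- 2 * t, 1]) (parabola_point s) > - t\<^sup>2"
proof -
  have "(s - t)\<^sup>2 > 0"
    using assms by simp
  then show ?thesis
    by (simp add: inner_parabola_point power2_eq_square algebra_simps)
qed

lemma convex_position_parabola: "convex_position (parabola_point ` T)"
  unfolding convex_position_def
proof
  fix q assume "q \<in> parabola_point ` T"
  then obtain t where q: "q = parabola_point t" by blast
  define H :: "(real^2) set" where "H = {z. inner (vector [- 2 * t, 1]) z > - t\<^sup>2}"
  have "parabola_point s \<in> H" if "parabola_point s \<noteq> q" for s
    using parabola_point_above_tangent[of s t] that q by (auto simp: H_def)
  then have "parabola_point ` T - {q} \<subseteq> H"
    using q by auto
  then have "convex hull (parabola_point ` T - {q}) \<subseteq> H"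
    by (simp add: H_def convex_halfspace_gt hull_minimal)
  moreover have "q \<notin> H"
    by (simp add: H_def q inner_parabola_point power2_eq_square)
  ultimately show "q \<notin> convex hull (parabola_point ` T - {q})"
    by blast
qed

lemma convex_position_mem_hull_iff:
  assumes "convex_position P" and "S \<subseteq> P" and "q \<in> P"
  shows "q \<in> convex hull S \<longleftrightarrow> q \<in> S"
proof
  assume "q \<in> convex hull S"
  moreover have "q \<notin> convex hull (P - {q})"
    using assms(1,3) unfolding convex_position_def by blast
  ultimately show "q \<in> S"
    using assms(2) hull_mono[of S "P - {q}"] by blast
qed (rule hull_inc)

lemma convex_position_mem_hull_image_iff:
  assumes "convex_position (p ` E)" and "inj_on p E" and "e \<in> E"
  shows "p e \<in> convex hull (p ` {e' \<in> E. Q e'}) \<longleftrightarrow> Q e"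
proof -
  have "p e \<in> convex hull (p ` {e' \<in> E. Q e'}) \<longleftrightarrow> p e \<in> p ` {e' \<in> E. Q e'}"
    using assms(1,3) by (intro convex_position_mem_hull_iff) auto
  also have "\<dots> \<longleftrightarrow> Q e"
    using inj_on_image_mem_iff[OF assms(2,3), of "{e' \<in> E. Q e'}"] assms(3) by auto
  finally show ?thesis .
qed

lemma exposed_incidence_image:
  assumes "\<And>e v. e \<in> E \<Longrightarrow> v \<in> X \<Longrightarrow> p e \<in> R v \<longleftrightarrow> v \<in> e" and "E \<subseteq> Pow X"
  shows "exposed (p ` E) (R ` (X - X')) = p ` {e \<in> E. e \<subseteq> X'}"
  unfolding exposed_def using assms by auto blast+

lemma card_exposed_eq_induced_edges:
  assumes "\<And>e v. e \<in> E \<Longrightarrow> v \<in> X \<Longrightarrow> p e \<in> R v \<longleftrightarrow> v \<in> e" and "E \<subseteq> Pow X"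
    and "inj_on p E"
  shows "card (exposed (p ` E) (R ` (X - X'))) = induced_edges E X'"
proof -
  have "exposed (p ` E) (R ` (X - X')) = p ` {e \<in> E. e \<subseteq> X'}"
    using assms(1,2) by (rule exposed_incidence_image)
  moreover have "inj_on p {e \<in> E. e \<subseteq> X'}"
    using assms(3) by (rule inj_on_subset) blast
  ultimately show ?thesis
    unfolding induced_edges_def by (simp add: card_image)
qed

theorem mainTheorem5:
  fixes X :: "'a set" and E :: "'a set set"
  assumes "finite X" and "E \<subseteq> Pow X"
  shows "\<exists>(p :: 'a set \<Rightarrow> real^2) (R :: 'a \<Rightarrow> (real^2) set).
     inj_on p E \<and> convex_position (p ` E) \<and>
     (\<forall>v\<in>X. \<exists>S. S \<subseteq> p ` E \<and> R v = convex hull S) \<and>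
     (\<forall>e\<in>E. \<forall>v\<in>X. p e \<in> R v \<longleftrightarrow> v \<in> e) \<and>
     (\<forall>X'. X' \<subseteq> X \<longrightarrow>
        induced_edges E X' = card (exposed (p ` E) (R ` (X - X')))) \<and>
     (\<forall>k X'. X' \<subseteq> X \<and> card X' = k \<longrightarrow>
        ((\<forall>Y. Y \<subseteq> X \<and> card Y = k \<longrightarrow> induced_edges E Y \<le> induced_edges E X') \<longleftrightarrow>
         (\<forall>Y. Y \<subseteq> X \<and> card Y = k \<longrightarrow>
            card (exposed (p ` E) (R ` (X - Y))) \<le> card (exposed (p ` E) (R ` (X - X'))))))"
proof -
  have "finite E"
    using assms by (simp add: finite_subset)
  then obtain g :: "'a set \<Rightarrow> nat" where "inj_on g E"
    using finite_imp_inj_to_nat_seg by blast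
  define p where "p e = parabola_point (real (g e))" for e
  define R where "R v = convex hull (p ` {e \<in> E. v \<in> e})" for v
  have inj: "inj_on p E"
    using \<open>inj_on g E\<close> by (simp add: p_def inj_on_def inj_eq[OF inj_parabola_point])
  have "p ` E = parabola_point ` (\<lambda>e. real (g e)) ` E"
    by (simp add: p_def image_image)
  then have conv: "convex_position (p ` E)"
    by (simp add: convex_position_parabola)
  have incidence: "p e \<in> R v \<longleftrightarrow> v \<in> e" if "e \<in> E" for e v
    unfolding R_def by (rule convex_position_mem_hull_image_iff[OF conv inj that])
  have exposed: "card (exposed (p ` E) (R ` (X - X'))) = induced_edges E X'" for X'
    using card_exposed_eq_induced_edges[OF incidence assms(2) inj] by blast
  have hulls: "\<exists>S. S \<subseteq> p ` E \<and> R v = convex hull S" for v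
    by (rule exI[of _ "p ` {e \<in> E. v \<in> e}"]) (auto simp: R_def)
  show ?thesis
    by (intro exI[of _ p] exI[of _ R] conjI inj conv hulls ballI allI impI)
      (simp_all add: incidence exposed)
qed

end
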